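(* Let $\alpha,\beta$ be relatively prime positive integers. For all positive integers $n$ with $s(n)>2$, $$\tfrac12\log_\gamma(n)-1\le s(n)\le\log_\gamma(n)+2.$$ Moreover, for $\alpha=\beta=1$ and all $n$ with $s^{1,1}(n)>2$, we have $s^{1,1}(n)\ge\frac12\log_\varphi(n)+2$, where $\varphi=\frac{1+\sqrt5}{2}$ is the golden ratio.
   Context: For relatively prime positive integers $\alpha,\beta$ and positive integers $a_1,a_2$, the $(\alpha,\beta)$-walk $w_k(a_1,a_2)$ is given by $w_1=a_1$, $w_2=a_2$, $w_{k+2}=\alpha w_{k+1}+\beta w_k$ ($k\ge1$). For a positive integer $n$, $s(n;a_1,a_2)$ is the (largest) index $s$ with $w_s(a_1,a_2)=n$ ($-\infty$ if none), and $s(n)=s^{\alpha,\beta}(n)=\max_{a_1,a_2\ge1}s(n;a_1,a_2)$. $\gamma=\frac12(\alpha+\sqrt{\alpha^2+4\beta})$. *)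

theory Defs
  imports Complex_Main
begin

text \<open>The (alpha,beta)-walk, 1-indexed: walk al be a1 a2 1 = a1, walk al be a1 a2 2 = a2,
  w(k+2) = al * w(k+1) + be * w(k).  Index 0 is a dummy value and never used.\<close>
fun walk :: "nat \<Rightarrow> nat \<Rightarrow> nat \<Rightarrow> nat \<Rightarrow> nat \<Rightarrow> nat" where
  "walk al be a1 a2 0 = 0"
| "walk al be a1 a2 (Suc 0) = a1"
| "walk al be a1 a2 (Suc (Suc 0)) = a2"
| "walk al be a1 a2 (Suc (Suc (Suc k))) =
     al * walk al be a1 a2 (Suc (Suc k)) + be * walk al be a1 a2 (Suc k)"

definition sidx :: "nat \<Rightarrow> nat \<Rightarrow> nat \<Rightarrow> nat" where
  "sidx al be n = Max {k. k \<ge> 1 \<and> (\<exists>a1 a2. a1 \<ge> 1 \<and> a2 \<ge> 1 \<and> walk al be a1 a2 k = n)}"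

definition gam :: "nat \<Rightarrow> nat \<Rightarrow> real" where
  "gam al be = (real al + sqrt (real al ^ 2 + 4 * real be)) / 2"

end

theory Submission
  imports Defs "HOL-Number_Theory.Cong" "HOL-Number_Theory.Fib"
begin

text \<open>
  Write W = walk al be 0 1 for the fundamental walk (W(1) = 0, W(2) = 1) and s = s(n).
  The geometric sequence \<gamma>^k solves the same recurrence as the walks, so comparing
  initial values gives \<gamma>^k \<le> \<gamma> w(k+1) for every walk with positive start, and
  W(k+2) \<le> \<gamma>^k. The first, at index s, is the upper bound \<gamma>^(s-2) \<le> n.

  For the lower bound, linearity gives w(k+2) = \<beta> W(k+1) a1 + W(k+2) a2, and the two
  coefficients \<beta> W(k+1), W(k+2) are coprime. Every integer above the product of two
  coprime numbers is a combination of them with positive coefficients, so if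
  n > \<beta> W(s) W(s+1) then some walk hits n at index s+1, contradicting maximality of s.
  Hence n \<le> \<beta> W(s) W(s+1) \<le> \<gamma>^(2s-1). For \<alpha> = \<beta> = 1 the walk W is the Fibonacci
  sequence, and Binet's formula sharpens this to n \<le> F(s-1) F(s) \<le> \<phi>^(2s-4).
\<close>

lemma coprime_add_mult_iff:
  fixes m k n :: nat
  shows "coprime m (n + m * k) \<longleftrightarrow> coprime m n"
  by (metis coprime_iff_gcd_eq_1 gcd_add_mult add.commute mult.commute)

lemma pos_lincomb_if_coprime:
  fixes A B n :: nat
  assumes "0 < A" "0 < B" "coprime A B" "A * B < n"
  obtains x y where "1 \<le> x" "1 \<le> y" "A * x + B * y = n"
proof -
  obtain u where u: "[A * u = n] (mod B)"
    using cong_solve_dvd_nat[of A B n] assms(3) by auto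
  define x where "x = (if u mod B = 0 then B else u mod B)"
  have x: "1 \<le> x" "x \<le> B"
    using assms(2) by (auto simp: x_def)
  have "[x = u] (mod B)"
    by (simp add: x_def cong_def)
  then have "[n = A * x] (mod B)"
    using u by (metis cong_scalar_left cong_sym cong_trans)
  moreover have "A * x < n"
    using x assms(4) by (meson le_less_trans mult_le_mono2)
  ultimately obtain y where y: "n = y * B + A * x"
    using cong_le_nat by auto
  with \<open>A * x < n\<close> have "1 \<le> y"
    by (cases y) simp_all
  with x y show ?thesis
    using that by simp
qed

lemma linrec_comparison:
  fixes u v :: "nat \<Rightarrow> real"
  assumes "0 \<le> a" "0 \<le> b"
    and "\<And>k. u (Suc (Suc k)) = a * u (Suc k) + b * u k"
    and "\<And>k. v (Suc (Suc k)) = a * v (Suc k) + b * v k"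
    and "u 0 \<le> v 0" "u 1 \<le> v 1"
  shows "u k \<le> v k"
proof (induction k rule: induct_nat_012)
  case (ge2 n)
  then show ?case
    unfolding assms(3,4) using assms(1,2) by (intro add_mono mult_left_mono)
qed (use assms(5,6) in simp_all)

lemma log_le_of_le_power:
  fixes b x :: real
  assumes "1 < b" "0 < x" "x \<le> b ^ m"
  shows "log b x \<le> m"
proof -
  have "b ^ m = b powr real m"
    using assms(1) by (simp add: powr_realpow)
  with assms show ?thesis
    by (simp only: log_le_iff)
qed

lemma le_log_of_power_le:
  fixes b x :: real
  assumes "1 < b" "b ^ m \<le> x"
  shows "m \<le> log b x"
proof -
  have "b ^ m = b powr real m"
    using assms(1) by (simp add: powr_realpow)
  moreover have "0 < x"
    using assms by (metis less_le_trans zero_less_one order.strict_trans zero_less_power)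
  ultimately show ?thesis
    using assms by (simp only: le_log_iff)
qed

lemma fib_mult_fib_Suc_bound:
  "5 * real (fib m * fib (Suc m)) \<le> ((1 + sqrt 5) / 2) ^ (2 * m + 1) + 1"
proof -
  define \<phi> \<psi> :: real where "\<phi> = (1 + sqrt 5) / 2" and "\<psi> = (1 - sqrt 5) / 2"
  have "\<phi> * \<psi> = -1" "\<phi> + \<psi> = 1"
    unfolding \<phi>_def \<psi>_def by (simp_all add: field_simps)
  have "5 * real (fib m * fib (Suc m)) = (\<phi> ^ m - \<psi> ^ m) * (\<phi> ^ Suc m - \<psi> ^ Suc m)"
    by (simp add: fib_closed_form[folded \<phi>_def \<psi>_def])
  also have "\<dots> = \<phi> ^ (2 * m + 1) - (\<phi> * \<psi>) ^ m * (\<phi> + \<psi>) + \<psi> ^ (2 * m + 1)"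
    by (simp add: algebra_simps power_mult_distrib power_mult power2_eq_square)
  also have "\<dots> = \<phi> ^ (2 * m + 1) - (-1) ^ m + \<psi> ^ (2 * m + 1)"
    unfolding \<open>\<phi> * \<psi> = -1\<close> \<open>\<phi> + \<psi> = 1\<close> by simp
  also have "\<dots> \<le> \<phi> ^ (2 * m + 1) + 1"
  proof -
    have "\<psi> < 0"
      unfolding \<psi>_def by (simp add: real_less_rsqrt)
    then have "\<psi> ^ Suc (2 * m) < 0"
      by (intro odd_power_less_zero)
    moreover have "- 1 \<le> ((-1) ^ m :: real)"
      by (cases "even m") simp_all
    ultimately show ?thesis
      by simp
  qed
  finally show ?thesis
    unfolding \<phi>_def .
qed

lemma fib_mult_fib_Suc_le:
  "real (fib (Suc m) * fib (Suc (Suc m))) \<le> ((1 + sqrt 5) / 2) ^ (2 * m)"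
proof (cases m)
  case (Suc k)
  \<comment> \<open>the estimate below needs \<open>m \<ge> 1\<close>; for \<open>m = 0\<close> the claim is just \<open>1 \<le> 1\<close>\<close>
  define \<phi> :: real where "\<phi> = (1 + sqrt 5) / 2"
  have power_split: "\<phi> ^ (2 * Suc m + 1) = \<phi> ^ (2 * m) * \<phi> ^ 3"
    by (simp add: power_add[symmetric] numeral_3_eq_3)
  have "5 * real (fib (Suc m) * fib (Suc (Suc m))) \<le> \<phi> ^ (2 * m) * \<phi> ^ 3 + 1"
    using fib_mult_fib_Suc_bound[of "Suc m", folded \<phi>_def] by (simp only: power_split)
  also have "\<dots> \<le> 5 * \<phi> ^ (2 * m)"
  proof -
    have "\<phi> ^ 3 = 2 + sqrt 5" "(3 - sqrt 5) * \<phi> ^ 2 = 2"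
      unfolding \<phi>_def by (simp_all add: power3_eq_cube power2_eq_square field_simps)
    moreover have "\<phi> ^ 2 \<le> \<phi> ^ (2 * m)"
      using Suc by (intro power_increasing) (simp_all add: \<phi>_def)
    moreover have "0 < 3 - sqrt 5"
      by (simp add: real_less_lsqrt)
    ultimately have "1 \<le> (3 - sqrt 5) * \<phi> ^ (2 * m)"
      by (metis mult_left_mono less_imp_le one_le_numeral order_trans)
    with \<open>\<phi> ^ 3 = 2 + sqrt 5\<close> show ?thesis
      by (simp add: algebra_simps)
  qed
  finally show ?thesis
    unfolding \<phi>_def by simp
qed simp

lemma walk_eq_fundamental:
  "walk al be a1 a2 (Suc (Suc k)) =
     be * walk al be 0 1 (Suc k) * a1 + walk al be 0 1 (Suc (Suc k)) * a2"
proof (induction k rule: induct_nat_012)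
  case (ge2 n)
  let ?w = "walk al be a1 a2" and ?W = "walk al be 0 1"
  have "?w (Suc (Suc (Suc (Suc n)))) = al * ?w (Suc (Suc (Suc n))) + be * ?w (Suc (Suc n))"
    by (rule walk.simps(4))
  also have "\<dots> = al * (be * ?W (Suc (Suc n)) * a1 + ?W (Suc (Suc (Suc n))) * a2)
                  + be * (be * ?W (Suc n) * a1 + ?W (Suc (Suc n)) * a2)"
    by (simp only: ge2.IH)
  also have "\<dots> = be * ?W (Suc (Suc (Suc n))) * a1 + ?W (Suc (Suc (Suc (Suc n)))) * a2"
    by (simp add: algebra_simps)
  finally show ?case .
qed simp_all

lemma coprime_walk_0_1:
  fixes al be :: nat
  assumes "coprime al be"
  shows "coprime (be * walk al be 0 1 (Suc k)) (walk al be 0 1 (Suc (Suc k)))"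
proof (induction k)
  case (Suc k)
  let ?W = "walk al be 0 1"
  have rec: "?W (Suc (Suc (Suc k))) = al * ?W (Suc (Suc k)) + be * ?W (Suc k)"
    by simp
  have "coprime be (?W (Suc (Suc k)))" and IH: "coprime (?W (Suc (Suc k))) (be * ?W (Suc k))"
    using Suc by (simp_all add: coprime_commute)
  then have "coprime be (al * ?W (Suc (Suc k)) + be * ?W (Suc k))"
    using assms by (simp add: coprime_add_mult_iff coprime_commute)
  moreover have "coprime (?W (Suc (Suc k))) (be * ?W (Suc k) + ?W (Suc (Suc k)) * al)"
    using IH by (simp only: coprime_add_mult_iff)
  ultimately show ?case
    unfolding rec by (simp add: add.commute mult.commute)
qed simp

lemma walk_0_1_pos:
  assumes "0 < al"
  shows "0 < walk al be 0 1 (Suc (Suc k))"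
  using assms by (induction k) simp_all

lemma walk_1_1_0_1_eq_fib: "walk 1 1 0 1 (Suc k) = fib k"
  by (induction k rule: induct_nat_012) simp_all

lemma walk_Suc_pos_ge:
  assumes "0 < al" "0 < be" "1 \<le> a1" "1 \<le> a2"
  shows "0 < walk al be a1 a2 (Suc k) \<and> k \<le> walk al be a1 a2 (Suc k)"
proof (induction k rule: induct_nat_012)
  case (ge2 n)
  have "walk al be a1 a2 (Suc n) \<le> be * walk al be a1 a2 (Suc n)"
    and "walk al be a1 a2 (Suc (Suc n)) \<le> al * walk al be a1 a2 (Suc (Suc n))"
    using assms by simp_all
  with ge2 show ?case
    by (simp only: walk.simps(4)) linarith
qed (use assms in simp_all)

lemma finite_walk_indices:
  assumes "0 < al" "0 < be"
  shows "finite {k. 1 \<le> k \<and> (\<exists>a1 a2. 1 \<le> a1 \<and> 1 \<le> a2 \<and> walk al be a1 a2 k = n)}"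
proof (rule finite_subset)
  show "{k. 1 \<le> k \<and> (\<exists>a1 a2. 1 \<le> a1 \<and> 1 \<le> a2 \<and> walk al be a1 a2 k = n)} \<subseteq> {..Suc n}"
  proof
    fix k
    assume "k \<in> {k. 1 \<le> k \<and> (\<exists>a1 a2. 1 \<le> a1 \<and> 1 \<le> a2 \<and> walk al be a1 a2 k = n)}"
    then obtain a1 a2 where "1 \<le> k" "1 \<le> a1" "1 \<le> a2" and hit: "walk al be a1 a2 k = n"
      by blast
    then obtain j where j: "k = Suc j"
      by (cases k) auto
    have "j \<le> n"
      using walk_Suc_pos_ge[OF assms \<open>1 \<le> a1\<close> \<open>1 \<le> a2\<close>, of j] hit j by simp
    with j show "k \<in> {..Suc n}"
      by simp
  qed
qed simp

lemma sidx_attained: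
  assumes "0 < al" "0 < be" "0 < n"
  shows "1 \<le> sidx al be n \<and> (\<exists>a1 a2. 1 \<le> a1 \<and> 1 \<le> a2 \<and> walk al be a1 a2 (sidx al be n) = n)"
proof -
  have "walk al be n 1 1 = n"
    by simp
  then have "1 \<in> {k. 1 \<le> k \<and> (\<exists>a1 a2. 1 \<le> a1 \<and> 1 \<le> a2 \<and> walk al be a1 a2 k = n)}"
    using assms(3) by force
  from Max_in[OF finite_walk_indices[OF assms(1,2)]] this show ?thesis
    unfolding sidx_def by blast
qed

lemma le_sidx:
  assumes "0 < al" "0 < be" "1 \<le> k" "1 \<le> a1" "1 \<le> a2" "walk al be a1 a2 k = n"
  shows "k \<le> sidx al be n"
  unfolding sidx_def using assms by (intro Max_ge finite_walk_indices) blast+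

lemma gam_sq: "gam al be ^ 2 = al * gam al be + be"
proof -
  have "sqrt (real al ^ 2 + 4 * real be) ^ 2 = real al ^ 2 + 4 * real be"
    by simp
  then show ?thesis
    unfolding gam_def by (simp add: power2_eq_square field_simps)
qed

lemma of_nat_less_gam:
  assumes "0 < be"
  shows "real al < gam al be"
proof -
  have "real al < sqrt (real al ^ 2 + 4 * real be)"
    using assms by (intro real_less_rsqrt) simp
  then show ?thesis
    unfolding gam_def by simp
qed

lemma one_less_gam:
  assumes "0 < al" "0 < be"
  shows "1 < gam al be"
  using of_nat_less_gam[OF assms(2), of al] assms(1) by linarith

lemma gam_power_rec: "gam al be ^ Suc (Suc k) = al * gam al be ^ Suc k + be * gam al be ^ k"
proof -
  have "gam al be ^ Suc (Suc k) = gam al be ^ k * gam al be ^ 2"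
    by (simp add: power_add[symmetric])
  then show ?thesis
    unfolding gam_sq by (simp add: algebra_simps)
qed

lemma gam_power_le_walk:
  assumes "0 < al" "0 < be" "1 \<le> a1" "1 \<le> a2"
  shows "gam al be ^ k \<le> gam al be * walk al be a1 a2 (Suc k)"
proof (rule linrec_comparison[where u = "\<lambda>k. gam al be ^ k"
      and v = "\<lambda>k. gam al be * walk al be a1 a2 (Suc k)"])
  have "1 \<le> gam al be"
    using one_less_gam[OF assms(1,2)] by simp
  with assms(3,4) show "gam al be ^ 0 \<le> gam al be * walk al be a1 a2 (Suc 0)"
    "gam al be ^ 1 \<le> gam al be * walk al be a1 a2 (Suc 1)"
    using mult_mono[of 1 "gam al be" 1] by simp_all
qed (use gam_power_rec in \<open>simp_all add: algebra_simps\<close>)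

lemma walk_0_1_le_gam_power:
  assumes "0 < be"
  shows "walk al be 0 1 (Suc (Suc k)) \<le> gam al be ^ k"
proof (rule linrec_comparison[where u = "\<lambda>k. walk al be 0 1 (Suc (Suc k))"
      and v = "\<lambda>k. gam al be ^ k"])
  show "walk al be 0 1 (Suc (Suc 1)) \<le> gam al be ^ 1"
    using of_nat_less_gam[OF assms, of al] by simp
qed (use gam_power_rec in \<open>simp_all add: algebra_simps\<close>)

lemma sidx_le_log_gam:
  assumes "0 < al" "0 < be" "0 < n"
  shows "real (sidx al be n) \<le> log (gam al be) n + 2"
proof -
  let ?g = "gam al be"
  obtain a1 a2 where "1 \<le> a1" "1 \<le> a2" and hit: "walk al be a1 a2 (sidx al be n) = n"
    and "1 \<le> sidx al be n"
    using sidx_attained[OF assms] by blast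
  then obtain k where k: "sidx al be n = Suc k"
    by (cases "sidx al be n") auto
  have "1 < ?g"
    using one_less_gam[OF assms(1,2)] .
  have "?g ^ k \<le> ?g * n"
    using gam_power_le_walk[OF assms(1,2) \<open>1 \<le> a1\<close> \<open>1 \<le> a2\<close>, of k] hit
    unfolding k by simp
  then have "real k \<le> log ?g (?g * n)"
    using le_log_of_power_le[OF \<open>1 < ?g\<close>] by simp
  also have "\<dots> = 1 + log ?g n"
    using \<open>1 < ?g\<close> assms(3) by (simp add: log_mult)
  finally show ?thesis
    using k by simp
qed

lemma le_be_mult_walk_0_1:
  assumes "0 < al" "0 < be" "coprime al be" "0 < n" "sidx al be n = Suc (Suc k)"
  shows "n \<le> be * walk al be 0 1 (Suc (Suc k)) * walk al be 0 1 (Suc (Suc (Suc k)))"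
proof (rule ccontr)
  let ?A = "be * walk al be 0 1 (Suc (Suc k))" and ?B = "walk al be 0 1 (Suc (Suc (Suc k)))"
  assume "\<not> ?thesis"
  then have "?A * ?B < n"
    by (simp only: not_le)
  moreover have "0 < ?A" "0 < ?B"
    using walk_0_1_pos[OF assms(1), of be k] walk_0_1_pos[OF assms(1), of be "Suc k"] assms(2)
    by (simp_all del: walk.simps(4))
  moreover have "coprime ?A ?B"
    using coprime_walk_0_1[OF assms(3)] .
  ultimately obtain x y where "1 \<le> x" "1 \<le> y" "?A * x + ?B * y = n"
    using pos_lincomb_if_coprime by blast
  then have "walk al be x y (Suc (Suc (Suc k))) = n"
    using walk_eq_fundamental[of al be x y "Suc k"] by (simp only:)
  then have "Suc (Suc (Suc k)) \<le> sidx al be n"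
    using le_sidx[OF assms(1,2) _ \<open>1 \<le> x\<close> \<open>1 \<le> y\<close>] by simp
  with assms(5) show False
    by simp
qed

lemma log_gam_le_sidx:
  assumes "0 < al" "0 < be" "coprime al be" "0 < n" "2 \<le> sidx al be n"
  shows "log (gam al be) n \<le> 2 * real (sidx al be n) - 1"
proof -
  let ?g = "gam al be" and ?W = "walk al be 0 1"
  obtain k where k: "sidx al be n = Suc (Suc k)"
    using assms(5) by (metis add_2_eq_Suc le_Suc_ex)
  have "real be \<le> ?g ^ 2"
    using gam_sq[of al be] one_less_gam[OF assms(1,2)] by simp
  have "real n \<le> real be * ?W (Suc (Suc k)) * ?W (Suc (Suc (Suc k)))"
    using le_be_mult_walk_0_1[OF assms(1-4) k] by (simp only: of_nat_le_iff flip: of_nat_mult)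
  also have "\<dots> \<le> ?g ^ 2 * ?g ^ k * ?g ^ Suc k"
    using \<open>real be \<le> ?g ^ 2\<close> walk_0_1_le_gam_power[OF assms(2), of al k]
      walk_0_1_le_gam_power[OF assms(2), of al "Suc k"] one_less_gam[OF assms(1,2)]
    by (intro mult_mono) (simp_all del: walk.simps(4))
  also have "\<dots> = ?g ^ (2 * k + 3)"
  proof -
    have "2 + k + Suc k = 2 * k + 3"
      by simp
    then show ?thesis
      by (simp only: power_add[symmetric])
  qed
  finally have "log ?g n \<le> 2 * k + 3"
    using log_le_of_le_power[of _ "real n" "2 * k + 3"] one_less_gam[OF assms(1,2)] assms(4)
    by simp
  with k show ?thesis
    by simp
qed

lemma log_golden_le_sidx:
  assumes "0 < n" "2 \<le> sidx 1 1 n"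
  shows "log ((1 + sqrt 5) / 2) n \<le> 2 * real (sidx 1 1 n) - 4"
proof -
  obtain k where k: "sidx 1 1 n = Suc (Suc k)"
    using assms(2) by (metis add_2_eq_Suc le_Suc_ex)
  have "n \<le> 1 * walk 1 1 0 1 (Suc (Suc k)) * walk 1 1 0 1 (Suc (Suc (Suc k)))"
    by (rule le_be_mult_walk_0_1) (use assms(1) k in simp_all)
  then have "n \<le> fib (Suc k) * fib (Suc (Suc k))"
    by (simp only: walk_1_1_0_1_eq_fib mult_1)
  then have "real n \<le> real (fib (Suc k) * fib (Suc (Suc k)))"
    by (simp only: of_nat_le_iff)
  also have "\<dots> \<le> ((1 + sqrt 5) / 2) ^ (2 * k)"
    by (rule fib_mult_fib_Suc_le)
  finally have "real n \<le> ((1 + sqrt 5) / 2) ^ (2 * k)" .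
  moreover have "1 < (1 + sqrt 5) / 2"
    by (simp add: real_less_rsqrt)
  ultimately have "log ((1 + sqrt 5) / 2) n \<le> 2 * k"
    using log_le_of_le_power[of _ "real n" "2 * k"] assms(1) by simp
  with k show ?thesis
    by simp
qed

theorem proposition3p4:
  fixes al be :: nat
  assumes "al > 0" "be > 0" "coprime al be"
  shows "(\<forall>n::nat. n > 0 \<and> sidx al be n > 2 \<longrightarrow>
            log (gam al be) (real n) / 2 - 1 \<le> real (sidx al be n) \<and>
            real (sidx al be n) \<le> log (gam al be) (real n) + 2)
       \<and> (\<forall>n::nat. n > 0 \<and> sidx 1 1 n > 2 \<longrightarrow>
            real (sidx 1 1 n) \<ge> log ((1 + sqrt 5) / 2) (real n) / 2 + 2)"
proof (intro conjI allI impI)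
  fix n :: nat
  assume n: "n > 0 \<and> sidx al be n > 2"
  then have "log (gam al be) n \<le> 2 * real (sidx al be n) - 1"
    using log_gam_le_sidx[OF assms] by simp
  then show "log (gam al be) n / 2 - 1 \<le> real (sidx al be n)"
    by simp
  show "real (sidx al be n) \<le> log (gam al be) n + 2"
    using sidx_le_log_gam[OF assms(1,2)] n by simp
next
  fix n :: nat
  assume "n > 0 \<and> sidx 1 1 n > 2"
  then have "log ((1 + sqrt 5) / 2) n \<le> 2 * real (sidx 1 1 n) - 4"
    using log_golden_le_sidx by simp
  then show "log ((1 + sqrt 5) / 2) n / 2 + 2 \<le> real (sidx 1 1 n)"
    by simp
qed

end
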